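(* Let $n\in\mathbb{Z}$ with $|n|\geq1$, $\alpha>0$, $R>0$ and $\kappa<\alpha^{-1}-\frac{r_0^2+n^2}{2R^2}$. Let $\{u_j\}_{j=1}^\infty$ be a sequence in $\mathcal{M}$ such that $\{\mathcal{I}_\kappa(u_j)\}$ is bounded. Then $\{u_j\}$ is bounded in $H$.
   Context: $r_0\approx2.404825$ is the first positive zero of the Bessel function $J_0$. $H$ is the completion of $\{u\in C^1[0,R]: u(0)=0=u(R)\}$ with respect to the inner product $(u,\tilde u)=\int_0^R\{ru_r\tilde u_r+\frac1r u\tilde u\}dr$. $\mathcal{I}_\kappa(u)=\frac12\int_0^R\{ru_r^2+\frac{n^2}{r}u^2-2(\alpha^{-1}-\kappa)ru^2+2\alpha^{-2}r\ln(1+\alpha u^2)\}dr$, $\gamma_\kappa(u)=\frac12\int_0^R\{ru_r^2+\frac{n^2}{r}u^2-2(\alpha^{-1}-\kappa)ru^2+2\alpha^{-1}\frac{ru^2}{1+\alpha u^2}\}dr$, and $\mathcal{M}=\{u\in H\setminus\{0\}:\gamma_\kappa(u)=0\}$. *)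

theory Defs
  imports "HOL-Analysis.Analysis"
begin

definition besselJ0 :: "real \<Rightarrow> real" where
  "besselJ0 x = (\<Sum>k. (-1)^k / (fact k)^2 * (x/2)^(2*k))"

definition r0 :: real where
  "r0 = Inf {x. x > 0 \<and> besselJ0 x = 0}"

text \<open>Elements of H are represented by pairs (u, u') of a function and its (weak) derivative,
  lying in the closure of C^1 functions vanishing at 0 and R with respect to the norm
  (int_0^R r u'^2 + u^2/r dr)^(1/2).  This realises the completion concretely inside the
  (complete) weighted L^2 space.\<close>
definition Hintegrand :: "(real \<Rightarrow> real) \<Rightarrow> (real \<Rightarrow> real) \<Rightarrow> real \<Rightarrow> real" where
  "Hintegrand u u' r = r * (u' r)^2 + (u r)^2 / r"

definition H_norm_sq :: "real \<Rightarrow> (real \<Rightarrow> real) \<times> (real \<Rightarrow> real) \<Rightarrow> real" where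
  "H_norm_sq R w = (LINT r:{0<..<R}|lborel. Hintegrand (fst w) (snd w) r)"

definition C1_test :: "real \<Rightarrow> (real \<Rightarrow> real) \<Rightarrow> (real \<Rightarrow> real) \<Rightarrow> bool" where
  "C1_test R \<phi> \<phi>' \<longleftrightarrow>
     (\<forall>x\<in>{0..R}. (\<phi> has_real_derivative \<phi>' x) (at x within {0..R}))
     \<and> continuous_on {0..R} \<phi>' \<and> \<phi> 0 = 0 \<and> \<phi> R = 0"

definition inH :: "real \<Rightarrow> (real \<Rightarrow> real) \<times> (real \<Rightarrow> real) \<Rightarrow> bool" where
  "inH R w \<longleftrightarrow>
     fst w \<in> borel_measurable lborel \<and> snd w \<in> borel_measurable lborel \<and>
     set_integrable lborel {0<..<R} (Hintegrand (fst w) (snd w)) \<and>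
     (\<exists>\<phi> \<phi>' :: nat \<Rightarrow> real \<Rightarrow> real.
        (\<forall>k. C1_test R (\<phi> k) (\<phi>' k)) \<and>
        (\<forall>k. set_integrable lborel {0<..<R}
               (Hintegrand (\<lambda>r. \<phi> k r - fst w r) (\<lambda>r. \<phi>' k r - snd w r))) \<and>
        (\<lambda>k. LINT r:{0<..<R}|lborel.
               Hintegrand (\<lambda>r. \<phi> k r - fst w r) (\<lambda>r. \<phi>' k r - snd w r) r)
          \<longlonglongrightarrow> 0)"

definition I_kappa :: "int \<Rightarrow> real \<Rightarrow> real \<Rightarrow> real \<Rightarrow> (real \<Rightarrow> real) \<times> (real \<Rightarrow> real) \<Rightarrow> real" where
  "I_kappa n \<alpha> R \<kappa> w = 1/2 * (LINT r:{0<..<R}|lborel.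
      r * (snd w r)^2 + (real_of_int n)^2 / r * (fst w r)^2
      - 2 * (1/\<alpha> - \<kappa>) * r * (fst w r)^2
      + 2 * (1/\<alpha>^2) * r * ln (1 + \<alpha> * (fst w r)^2))"

definition gamma_kappa :: "int \<Rightarrow> real \<Rightarrow> real \<Rightarrow> real \<Rightarrow> (real \<Rightarrow> real) \<times> (real \<Rightarrow> real) \<Rightarrow> real" where
  "gamma_kappa n \<alpha> R \<kappa> w = 1/2 * (LINT r:{0<..<R}|lborel.
      r * (snd w r)^2 + (real_of_int n)^2 / r * (fst w r)^2
      - 2 * (1/\<alpha> - \<kappa>) * r * (fst w r)^2
      + 2 * (1/\<alpha>) * (r * (fst w r)^2 / (1 + \<alpha> * (fst w r)^2)))"

definition Mset :: "int \<Rightarrow> real \<Rightarrow> real \<Rightarrow> real \<Rightarrow> ((real \<Rightarrow> real) \<times> (real \<Rightarrow> real)) set" where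
  "Mset n \<alpha> R \<kappa> = {w. inH R w \<and> H_norm_sq R w \<noteq> 0 \<and> gamma_kappa n \<alpha> R \<kappa> w = 0}"

end

theory Submission
  imports Defs
begin

text \<open>On the Nehari set, \<open>\<gamma>\<^sub>\<kappa>(u) = 0\<close> gives \<open>\<parallel>u\<parallel>\<^sup>2 \<le> 2 \<bar>\<alpha>\<^sup>-\<^sup>1 - \<kappa>\<bar> \<integral> r u\<^sup>2\<close>,
  and \<open>\<I>\<^sub>\<kappa>(u) = \<I>\<^sub>\<kappa>(u) - \<gamma>\<^sub>\<kappa>(u) = \<alpha>\<^sup>-\<^sup>2 \<integral> r (ln (1 + \<alpha> u\<^sup>2) - \<alpha> u\<^sup>2 / (1 + \<alpha> u\<^sup>2))\<close>
  has a nonnegative integrand growing like \<open>r ln (1 + \<alpha> u\<^sup>2)\<close>. So a bound on \<open>\<I>\<^sub>\<kappa>\<close>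
  controls \<open>\<integral> r u\<^sup>2\<close> over the set where \<open>u\<^sup>2\<close> exceeds a large threshold, with a factor of
  order \<open>sup u\<^sup>2 \<lesssim> \<parallel>u\<parallel>\<^sup>2\<close> (via a C^1 approximant) divided by the threshold's logarithm;
  for a large threshold this term is absorbed, bounding \<open>\<integral> r u\<^sup>2\<close> and hence \<open>\<parallel>u\<parallel>\<^sup>2\<close>.\<close>

lemma square_le_double_sum:
  fixes a b :: real
  shows "a\<^sup>2 \<le> 2 * b\<^sup>2 + 2 * (a - b)\<^sup>2"
  using sum_squares_ge_zero[of "a - 2 * b" 0] by (simp add: power2_eq_square algebra_simps)

lemma two_mult_le_weighted_squares:
  fixes p q r :: real
  assumes "0 < r"
  shows "2 * p * q \<le> r * q\<^sup>2 + p\<^sup>2 / r"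
proof -
  have "2 * p * q * r \<le> r * (r * q\<^sup>2) + p\<^sup>2"
    using sum_squares_ge_zero[of "r * q - p" 0] by (simp add: power2_eq_square algebra_simps)
  then show ?thesis
    using assms by (simp add: field_simps)
qed

lemma frac_le_ln_one_plus:
  fixes s :: real
  assumes "0 \<le> s"
  shows "s / (1 + s) \<le> ln (1 + s)"
proof -
  have "ln (1 / (1 + s)) \<le> 1 / (1 + s) - 1"
    using assms by (intro ln_le_minus_one) auto
  then show ?thesis
    using assms by (simp add: ln_div field_simps)
qed

lemma ln_one_plus_minus_frac_ge:
  fixes s \<eta> :: real
  assumes "0 \<le> s" and "exp (\<eta> + 1) - 1 \<le> s"
  shows "\<eta> \<le> ln (1 + s) - s / (1 + s)"
proof -
  have "\<eta> + 1 \<le> ln (1 + s)"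
  proof -
    have "exp (\<eta> + 1) \<le> 1 + s"
      using assms(2) by simp
    then show ?thesis
      by (metis exp_gt_zero ln_exp ln_le_cancel_iff order_less_le_trans)
  qed
  moreover have "s / (1 + s) \<le> 1"
    using assms(1) by simp
  ultimately show ?thesis
    by linarith
qed

lemma log_gap_bounds:
  fixes \<alpha> r x \<eta> :: real
  assumes \<alpha>: "0 < \<alpha>" and r: "0 < r"
  shows "0 \<le> r * (ln (1 + \<alpha> * x\<^sup>2) - \<alpha> * x\<^sup>2 / (1 + \<alpha> * x\<^sup>2))"
    and "(exp (\<eta> + 1) - 1) / \<alpha> < x\<^sup>2 \<Longrightarrow> \<eta> * r \<le> r * (ln (1 + \<alpha> * x\<^sup>2) - \<alpha> * x\<^sup>2 / (1 + \<alpha> * x\<^sup>2))"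
proof -
  show "0 \<le> r * (ln (1 + \<alpha> * x\<^sup>2) - \<alpha> * x\<^sup>2 / (1 + \<alpha> * x\<^sup>2))"
    using \<alpha> r frac_le_ln_one_plus[of "\<alpha> * x\<^sup>2"] by simp
  assume "(exp (\<eta> + 1) - 1) / \<alpha> < x\<^sup>2"
  then have "exp (\<eta> + 1) - 1 \<le> \<alpha> * x\<^sup>2"
    using \<alpha> by (simp add: divide_less_eq mult.commute)
  then have "\<eta> \<le> ln (1 + \<alpha> * x\<^sup>2) - \<alpha> * x\<^sup>2 / (1 + \<alpha> * x\<^sup>2)"
    using \<alpha> by (intro ln_one_plus_minus_frac_ge) auto
  then show "\<eta> * r \<le> r * (ln (1 + \<alpha> * x\<^sup>2) - \<alpha> * x\<^sup>2 / (1 + \<alpha> * x\<^sup>2))"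
    using r by (simp add: mult.commute mult_left_mono)
qed

lemma set_integrable_real_bound:
  fixes f g :: "real \<Rightarrow> real"
  assumes "set_integrable lborel A f" and "g \<in> borel_measurable lborel" and "A \<in> sets lborel"
    and "\<And>x. x \<in> A \<Longrightarrow> \<bar>g x\<bar> \<le> f x"
  shows "set_integrable lborel A g"
proof (rule set_integrable_bound[OF assms(1)])
  show "set_borel_measurable lborel A g"
    unfolding set_borel_measurable_def using assms(2,3) by measurable
  show "AE x\<in>A in lborel. norm (g x) \<le> norm (f x)"
    using assms(4) by (auto intro!: AE_I2) (smt (verit) real_norm_def)
qed

lemma set_integral_nonneg:
  fixes f :: "'a \<Rightarrow> real"
  shows "(\<And>x. x \<in> A \<Longrightarrow> 0 \<le> f x) \<Longrightarrow> 0 \<le> (LINT x:A|M. f x)"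
  unfolding set_lebesgue_integral_def
  by (auto intro!: Bochner_Integration.integral_nonneg simp: indicator_def)

lemma set_integrable_const_Ioo: "set_integrable lborel {a<..<b::real} (\<lambda>_. c :: real)"
proof -
  have "bounded {a<..<b}"
    by (rule bounded_subset[of "{a..b}"]) auto
  then have "emeasure lborel {a<..<b} < \<infinity>"
    by (rule emeasure_bounded_finite)
  then have "integrable lborel (indicat_real {a<..<b})"
    by (intro integrable_real_indicator) auto
  then show ?thesis
    unfolding set_integrable_def by simp
qed

lemma set_integral_const_Ioo: "a \<le> (b::real) \<Longrightarrow> (LINT x:{a<..<b}|lborel. c) = (b - a) * c"
  by (subst set_integral_const) (auto simp: emeasure_lborel_Ioo)

lemma set_integral_lincomb4:
  fixes f1 f2 f3 f4 :: "'a \<Rightarrow> real"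
  assumes "set_integrable M A f1" "set_integrable M A f2" "set_integrable M A f3"
    "set_integrable M A f4"
  shows "(LINT x:A|M. f1 x + b * f2 x - c * f3 x + d * f4 x) =
    (LINT x:A|M. f1 x) + b * (LINT x:A|M. f2 x) - c * (LINT x:A|M. f3 x) + d * (LINT x:A|M. f4 x)"
  using assms by (simp add: set_integral_add set_integral_diff set_integrable_mult_right)

lemma square_le_set_integral_of_deriv:
  fixes \<phi> \<phi>' F :: "real \<Rightarrow> real"
  assumes deriv: "\<forall>y\<in>{0..R}. (\<phi> has_real_derivative \<phi>' y) (at y within {0..R})"
    and "\<phi> 0 = 0"
    and F: "set_integrable lborel {0<..<R} F"
    and le: "\<And>r. r \<in> {0<..<R} \<Longrightarrow> 2 * \<phi> r * \<phi>' r \<le> F r"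
    and nonneg: "\<And>r. r \<in> {0<..<R} \<Longrightarrow> 0 \<le> F r"
    and x: "x \<in> {0<..<R}"
  shows "(\<phi> x)\<^sup>2 \<le> (LINT r:{0<..<R}|lborel. F r)"
proof -
  have "((\<lambda>r. 2 * \<phi> r * \<phi>' r) has_integral ((\<phi> x)\<^sup>2 - (\<phi> 0)\<^sup>2)) {0..x}"
  proof (rule fundamental_theorem_of_calculus)
    fix y assume "y \<in> {0..x}"
    then have "(\<phi> has_real_derivative \<phi>' y) (at y within {0..x})"
      using x by (intro DERIV_subset[OF deriv[rule_format]]) auto
    from DERIV_mult[OF this this]
    show "((\<lambda>r. (\<phi> r)\<^sup>2) has_vector_derivative (2 * \<phi> y * \<phi>' y)) (at y within {0..x})"
      by (simp add: has_real_derivative_iff_has_vector_derivative power2_eq_square algebra_simps)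
  qed (use x in simp)
  then have FTC: "((\<lambda>r. 2 * \<phi> r * \<phi>' r) has_integral (\<phi> x)\<^sup>2) {0<..<x}"
    using \<open>\<phi> 0 = 0\<close> by (simp add: has_integral_Icc_iff_Ioo)
  have Fx: "F integrable_on {0<..<x}"
    using x by (intro set_borel_integral_eq_integral(1) set_integrable_subset[OF F]) auto
  have "(\<phi> x)\<^sup>2 \<le> integral {0<..<x} F"
    using FTC Fx le x by (intro has_integral_le[OF FTC integrable_integral[OF Fx]]) auto
  also have "\<dots> \<le> integral {0<..<R} F"
    using Fx set_borel_integral_eq_integral(1)[OF F] nonneg x by (intro integral_subset_le) auto
  also have "\<dots> = (LINT r:{0<..<R}|lborel. F r)"
    using set_borel_integral_eq_integral(2)[OF F] by simp
  finally show ?thesis .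
qed

lemma two_mult_le_Hintegrand_split:
  fixes \<phi> \<phi>' u v :: "real \<Rightarrow> real"
  assumes r: "0 < r"
  shows "2 * \<phi> r * \<phi>' r \<le>
    2 * Hintegrand u v r + 2 * Hintegrand (\<lambda>r. \<phi> r - u r) (\<lambda>r. \<phi>' r - v r) r"
proof -
  have "2 * \<phi> r * \<phi>' r \<le> r * (\<phi>' r)\<^sup>2 + (\<phi> r)\<^sup>2 / r"
    using r by (rule two_mult_le_weighted_squares)
  also have "\<dots> \<le> r * (2 * (v r)\<^sup>2 + 2 * (\<phi>' r - v r)\<^sup>2) + (2 * (u r)\<^sup>2 + 2 * (\<phi> r - u r)\<^sup>2) / r"
  proof (rule add_mono)
    show "r * (\<phi>' r)\<^sup>2 \<le> r * (2 * (v r)\<^sup>2 + 2 * (\<phi>' r - v r)\<^sup>2)"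
      using r square_le_double_sum[of "\<phi>' r" "v r"] by (intro mult_left_mono) auto
    show "(\<phi> r)\<^sup>2 / r \<le> (2 * (u r)\<^sup>2 + 2 * (\<phi> r - u r)\<^sup>2) / r"
      using r square_le_double_sum[of "\<phi> r" "u r"] by (intro divide_right_mono) auto
  qed
  also have "\<dots> = 2 * Hintegrand u v r + 2 * Hintegrand (\<lambda>r. \<phi> r - u r) (\<lambda>r. \<phi>' r - v r) r"
    by (simp add: Hintegrand_def algebra_simps add_divide_distrib)
  finally show ?thesis .
qed

text \<open>\<open>\<phi>\<close> is one of the C^1 approximants of \<open>u\<close> from the definition of \<open>H\<close>; it is bounded
  because \<open>\<phi>(x)\<^sup>2 = \<integral>\<^sub>0\<^sup>x 2 \<phi> \<phi>'\<close>.\<close>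
lemma inH_close_to_bounded:
  assumes "inH R (u, v)"
  obtains \<phi> d where "\<And>x. x \<in> {0<..<R} \<Longrightarrow> (\<phi> x)\<^sup>2 \<le> 2 * H_norm_sq R (u, v) + 2"
    and "set_integrable lborel {0<..<R} d" and "(LINT r:{0<..<R}|lborel. d r) \<le> 1"
    and "\<And>r. r \<in> {0<..<R} \<Longrightarrow> (u r - \<phi> r)\<^sup>2 / r \<le> d r"
proof -
  from assms have hint: "set_integrable lborel {0<..<R} (Hintegrand u v)"
    unfolding inH_def by auto
  from assms obtain \<phi> \<phi>' :: "nat \<Rightarrow> real \<Rightarrow> real" where
    C1: "\<And>k. C1_test R (\<phi> k) (\<phi>' k)" and
    hdi: "\<And>k. set_integrable lborel {0<..<R} (Hintegrand (\<lambda>r. \<phi> k r - u r) (\<lambda>r. \<phi>' k r - v r))" and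
    lim: "(\<lambda>k. LINT r:{0<..<R}|lborel. Hintegrand (\<lambda>r. \<phi> k r - u r) (\<lambda>r. \<phi>' k r - v r) r)
            \<longlonglongrightarrow> 0"
    unfolding inH_def by auto
  obtain k where k: "\<bar>LINT r:{0<..<R}|lborel. Hintegrand (\<lambda>r. \<phi> k r - u r) (\<lambda>r. \<phi>' k r - v r) r\<bar> < 1"
    using LIMSEQ_D[OF lim zero_less_one] by auto
  define d where "d = Hintegrand (\<lambda>r. \<phi> k r - u r) (\<lambda>r. \<phi>' k r - v r)"
  define F where "F = (\<lambda>r. 2 * Hintegrand u v r + 2 * d r)"
  have iF: "set_integrable lborel {0<..<R} F"
    unfolding F_def d_def using hint hdi by (intro set_integral_add(1) set_integrable_mult_right)
  have "(\<phi> k x)\<^sup>2 \<le> 2 * H_norm_sq R (u, v) + 2" if x: "x \<in> {0<..<R}" for x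
  proof -
    have "(\<phi> k x)\<^sup>2 \<le> (LINT r:{0<..<R}|lborel. F r)"
    proof (rule square_le_set_integral_of_deriv[OF _ _ iF _ _ x])
      show "\<forall>y\<in>{0..R}. (\<phi> k has_real_derivative \<phi>' k y) (at y within {0..R})" "\<phi> k 0 = 0"
        using C1[of k] unfolding C1_test_def by auto
      fix r :: real assume r: "r \<in> {0<..<R}"
      then show "2 * \<phi> k r * \<phi>' k r \<le> F r"
        unfolding F_def d_def by (intro two_mult_le_Hintegrand_split) auto
      show "0 \<le> F r"
        using r by (simp add: F_def d_def Hintegrand_def)
    qed
    also have "\<dots> = 2 * H_norm_sq R (u, v) + 2 * (LINT r:{0<..<R}|lborel. d r)"
      unfolding F_def using hint hdi
      by (simp add: set_integral_add set_integrable_mult_right H_norm_sq_def d_def)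
    finally show ?thesis
      using k by (simp add: d_def)
  qed
  moreover have "set_integrable lborel {0<..<R} d"
    unfolding d_def by (rule hdi)
  moreover have "(LINT r:{0<..<R}|lborel. d r) \<le> 1"
    using k by (simp add: d_def)
  moreover have "(u r - \<phi> k r)\<^sup>2 / r \<le> d r" if "r \<in> {0<..<R}" for r
    using that by (simp add: d_def Hintegrand_def power2_commute)
  ultimately show ?thesis
    using that by blast
qed

lemma inH_set_integrable:
  assumes "inH R (u, v)" and "0 \<le> \<alpha>"
  shows "set_integrable lborel {0<..<R} (\<lambda>r. r * (v r)\<^sup>2)"
    and "set_integrable lborel {0<..<R} (\<lambda>r. (u r)\<^sup>2 / r)"
    and "set_integrable lborel {0<..<R} (\<lambda>r. r * (u r)\<^sup>2)"
    and "set_integrable lborel {0<..<R} (\<lambda>r. r * (u r)\<^sup>2 / (1 + \<alpha> * (u r)\<^sup>2))"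
    and "set_integrable lborel {0<..<R} (\<lambda>r. r * ln (1 + \<alpha> * (u r)\<^sup>2))"
    and "set_integrable lborel {0<..<R}
      (\<lambda>r. r * (ln (1 + \<alpha> * (u r)\<^sup>2) - \<alpha> * (u r)\<^sup>2 / (1 + \<alpha> * (u r)\<^sup>2)))"
proof -
  from assms(1) have [measurable]: "u \<in> borel_measurable lborel" "v \<in> borel_measurable lborel"
    and hint: "set_integrable lborel {0<..<R} (\<lambda>r. r * (v r)\<^sup>2 + (u r)\<^sup>2 / r)"
    unfolding inH_def Hintegrand_def by auto
  show "set_integrable lborel {0<..<R} (\<lambda>r. r * (v r)\<^sup>2)"
    by (rule set_integrable_real_bound[OF hint]) auto
  show Q: "set_integrable lborel {0<..<R} (\<lambda>r. (u r)\<^sup>2 / r)"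
    by (rule set_integrable_real_bound[OF hint]) auto
  have "r * (u r)\<^sup>2 \<le> R\<^sup>2 * ((u r)\<^sup>2 / r)" if "r \<in> {0<..<R}" for r
  proof -
    have "r * (u r)\<^sup>2 = r\<^sup>2 * ((u r)\<^sup>2 / r)"
      using that by (simp add: power2_eq_square)
    also have "\<dots> \<le> R\<^sup>2 * ((u r)\<^sup>2 / r)"
      using that by (intro mult_right_mono power_mono) auto
    finally show ?thesis .
  qed
  then show T: "set_integrable lborel {0<..<R} (\<lambda>r. r * (u r)\<^sup>2)"
    by (intro set_integrable_real_bound[OF set_integrable_mult_right[OF Q, of "R\<^sup>2"]]) auto
  have "\<bar>r * (u r)\<^sup>2 / (1 + \<alpha> * (u r)\<^sup>2)\<bar> \<le> r * (u r)\<^sup>2" if "r \<in> {0<..<R}" for r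
  proof -
    have "r * (u r)\<^sup>2 / (1 + \<alpha> * (u r)\<^sup>2) \<le> r * (u r)\<^sup>2 / 1"
      using that assms(2) by (intro divide_left_mono) (auto intro: add_pos_nonneg)
    then show ?thesis
      using that assms(2) by simp
  qed
  then show Z: "set_integrable lborel {0<..<R} (\<lambda>r. r * (u r)\<^sup>2 / (1 + \<alpha> * (u r)\<^sup>2))"
    by (intro set_integrable_real_bound[OF T]) auto
  have "\<bar>r * ln (1 + \<alpha> * (u r)\<^sup>2)\<bar> \<le> \<alpha> * (r * (u r)\<^sup>2)" if "r \<in> {0<..<R}" for r
  proof -
    have "0 \<le> ln (1 + \<alpha> * (u r)\<^sup>2)" "ln (1 + \<alpha> * (u r)\<^sup>2) \<le> \<alpha> * (u r)\<^sup>2"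
      using assms(2) ln_add_one_self_le_self[of "\<alpha> * (u r)\<^sup>2"] by auto
    then show ?thesis
      using that by (simp add: abs_mult mult_left_mono mult.left_commute)
  qed
  then show L: "set_integrable lborel {0<..<R} (\<lambda>r. r * ln (1 + \<alpha> * (u r)\<^sup>2))"
    by (intro set_integrable_real_bound[OF set_integrable_mult_right[OF T, of \<alpha>]]) auto
  have "set_integrable lborel {0<..<R}
      (\<lambda>r. r * ln (1 + \<alpha> * (u r)\<^sup>2) - \<alpha> * (r * (u r)\<^sup>2 / (1 + \<alpha> * (u r)\<^sup>2)))"
    using L Z by (intro set_integral_diff(1) set_integrable_mult_right)
  then show "set_integrable lborel {0<..<R}
      (\<lambda>r. r * (ln (1 + \<alpha> * (u r)\<^sup>2) - \<alpha> * (u r)\<^sup>2 / (1 + \<alpha> * (u r)\<^sup>2)))"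
    by (simp add: algebra_simps)
qed

lemma gamma_kappa_split:
  assumes "inH R (u, v)" and "0 < \<alpha>"
  shows "gamma_kappa n \<alpha> R \<kappa> (u, v) = 1/2 * ((LINT r:{0<..<R}|lborel. r * (v r)\<^sup>2)
    + (real_of_int n)\<^sup>2 * (LINT r:{0<..<R}|lborel. (u r)\<^sup>2 / r)
    - 2 * (1/\<alpha> - \<kappa>) * (LINT r:{0<..<R}|lborel. r * (u r)\<^sup>2)
    + 2 / \<alpha> * (LINT r:{0<..<R}|lborel. r * (u r)\<^sup>2 / (1 + \<alpha> * (u r)\<^sup>2)))"
    (is "_ = ?rhs")
proof -
  have "gamma_kappa n \<alpha> R \<kappa> (u, v) = 1/2 * (LINT r:{0<..<R}|lborel. r * (v r)\<^sup>2
    + (real_of_int n)\<^sup>2 * ((u r)\<^sup>2 / r) - 2 * (1/\<alpha> - \<kappa>) * (r * (u r)\<^sup>2)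
    + 2 / \<alpha> * (r * (u r)\<^sup>2 / (1 + \<alpha> * (u r)\<^sup>2)))"
    unfolding gamma_kappa_def by (simp add: algebra_simps)
  also have "\<dots> = ?rhs"
    using inH_set_integrable[OF assms(1) less_imp_le[OF assms(2)]]
    by (subst set_integral_lincomb4) auto
  finally show ?thesis .
qed

lemma I_kappa_split:
  assumes "inH R (u, v)" and "0 < \<alpha>"
  shows "I_kappa n \<alpha> R \<kappa> (u, v) = 1/2 * ((LINT r:{0<..<R}|lborel. r * (v r)\<^sup>2)
    + (real_of_int n)\<^sup>2 * (LINT r:{0<..<R}|lborel. (u r)\<^sup>2 / r)
    - 2 * (1/\<alpha> - \<kappa>) * (LINT r:{0<..<R}|lborel. r * (u r)\<^sup>2)
    + 2 / \<alpha>\<^sup>2 * (LINT r:{0<..<R}|lborel. r * ln (1 + \<alpha> * (u r)\<^sup>2)))"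
    (is "_ = ?rhs")
proof -
  have "I_kappa n \<alpha> R \<kappa> (u, v) = 1/2 * (LINT r:{0<..<R}|lborel. r * (v r)\<^sup>2
    + (real_of_int n)\<^sup>2 * ((u r)\<^sup>2 / r) - 2 * (1/\<alpha> - \<kappa>) * (r * (u r)\<^sup>2)
    + 2 / \<alpha>\<^sup>2 * (r * ln (1 + \<alpha> * (u r)\<^sup>2)))"
    unfolding I_kappa_def by (simp add: algebra_simps)
  also have "\<dots> = ?rhs"
    using inH_set_integrable[OF assms(1) less_imp_le[OF assms(2)]]
    by (subst set_integral_lincomb4) auto
  finally show ?thesis .
qed

lemma Mset_norm_le_weighted_L2:
  assumes "(u, v) \<in> Mset n \<alpha> R \<kappa>" and "1 \<le> \<bar>n\<bar>" and "0 < \<alpha>"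
  shows "H_norm_sq R (u, v) \<le> 2 * \<bar>1/\<alpha> - \<kappa>\<bar> * (LINT r:{0<..<R}|lborel. r * (u r)\<^sup>2)"
proof -
  have inH: "inH R (u, v)" and gamma: "gamma_kappa n \<alpha> R \<kappa> (u, v) = 0"
    using assms(1) by (auto simp: Mset_def)
  note ints = inH_set_integrable[OF inH less_imp_le[OF assms(3)]]
  define P where "P = (LINT r:{0<..<R}|lborel. r * (v r)\<^sup>2)"
  define Q where "Q = (LINT r:{0<..<R}|lborel. (u r)\<^sup>2 / r)"
  define T where "T = (LINT r:{0<..<R}|lborel. r * (u r)\<^sup>2)"
  define Z where "Z = (LINT r:{0<..<R}|lborel. r * (u r)\<^sup>2 / (1 + \<alpha> * (u r)\<^sup>2))"
  have "H_norm_sq R (u, v) = P + Q"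
    unfolding H_norm_sq_def Hintegrand_def P_def Q_def using ints by (simp add: set_integral_add)
  also have "\<dots> \<le> P + (real_of_int n)\<^sup>2 * Q"
  proof -
    have "1 \<le> \<bar>real_of_int n\<bar>"
      using assms(2) by (metis of_int_1_le_iff of_int_abs)
    then have "1 \<le> (real_of_int n)\<^sup>2"
      using one_le_power[of "\<bar>real_of_int n\<bar>" 2] by simp
    moreover have "0 \<le> Q"
      unfolding Q_def by (rule set_integral_nonneg) simp
    ultimately show ?thesis
      using mult_right_mono[of 1 "(real_of_int n)\<^sup>2" Q] by simp
  qed
  also have "\<dots> \<le> 2 * (1/\<alpha> - \<kappa>) * T"
  proof -
    have "P + (real_of_int n)\<^sup>2 * Q - 2 * (1/\<alpha> - \<kappa>) * T + 2 / \<alpha> * Z = 0"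
      using gamma unfolding gamma_kappa_split[OF inH assms(3)] P_def Q_def T_def Z_def by simp
    moreover have "0 \<le> 2 / \<alpha> * Z"
      unfolding Z_def using assms(3) by (intro mult_nonneg_nonneg set_integral_nonneg) simp_all
    ultimately show ?thesis
      by linarith
  qed
  also have "\<dots> \<le> 2 * \<bar>1/\<alpha> - \<kappa>\<bar> * T"
    using abs_ge_self[of "1/\<alpha> - \<kappa>"]
    unfolding T_def by (intro mult_right_mono set_integral_nonneg) auto
  finally show ?thesis
    unfolding T_def .
qed

text \<open>On \<open>\<M>\<close> the functional equals \<open>\<I>\<^sub>\<kappa> - \<gamma>\<^sub>\<kappa>\<close>, in which the quadratic terms cancel.\<close>
lemma Mset_log_gap_integral:
  assumes "(u, v) \<in> Mset n \<alpha> R \<kappa>" and "0 < \<alpha>"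
  shows "(LINT r:{0<..<R}|lborel. r * (ln (1 + \<alpha> * (u r)\<^sup>2) - \<alpha> * (u r)\<^sup>2 / (1 + \<alpha> * (u r)\<^sup>2)))
    = \<alpha>\<^sup>2 * I_kappa n \<alpha> R \<kappa> (u, v)"
proof -
  have inH: "inH R (u, v)" and gamma: "gamma_kappa n \<alpha> R \<kappa> (u, v) = 0"
    using assms(1) by (auto simp: Mset_def)
  note ints = inH_set_integrable[OF inH less_imp_le[OF assms(2)]]
  define L where "L = (LINT r:{0<..<R}|lborel. r * ln (1 + \<alpha> * (u r)\<^sup>2))"
  define Z where "Z = (LINT r:{0<..<R}|lborel. r * (u r)\<^sup>2 / (1 + \<alpha> * (u r)\<^sup>2))"
  have "(LINT r:{0<..<R}|lborel. r * (ln (1 + \<alpha> * (u r)\<^sup>2) - \<alpha> * (u r)\<^sup>2 / (1 + \<alpha> * (u r)\<^sup>2)))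
      = (LINT r:{0<..<R}|lborel. r * ln (1 + \<alpha> * (u r)\<^sup>2) - \<alpha> * (r * (u r)\<^sup>2 / (1 + \<alpha> * (u r)\<^sup>2)))"
    by (rule set_lebesgue_integral_cong) (auto simp: algebra_simps)
  also have "\<dots> = L - \<alpha> * Z"
    unfolding L_def Z_def set_integral_diff(2)[OF ints(5) set_integrable_mult_right[OF ints(4)]]
      set_integral_mult_right ..
  also have "\<dots> = \<alpha>\<^sup>2 * (I_kappa n \<alpha> R \<kappa> (u, v) - gamma_kappa n \<alpha> R \<kappa> (u, v))"
    unfolding I_kappa_split[OF inH assms(2)] gamma_kappa_split[OF inH assms(2)] L_def Z_def
    using assms(2) by (simp add: field_simps power2_eq_square)
  finally show ?thesis
    using gamma by simp
qed

text \<open>Above the threshold \<open>M\<close>, \<open>r u\<^sup>2\<close> is split through the bounded \<open>\<phi>\<close> and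
  \<open>r \<phi>\<^sup>2 \<le> B r\<close> is charged to \<open>G \<ge> \<eta> r\<close>.\<close>
lemma weighted_L2_threshold_bound:
  fixes u \<phi> d G :: "real \<Rightarrow> real" and R M \<eta> B :: real
  assumes R: "0 < R" and M: "0 \<le> M" and \<eta>: "0 < \<eta>" and B: "0 \<le> B"
    and T: "set_integrable lborel {0<..<R} (\<lambda>r. r * (u r)\<^sup>2)"
    and G: "set_integrable lborel {0<..<R} G" and d: "set_integrable lborel {0<..<R} d"
    and G_nonneg: "\<And>r. r \<in> {0<..<R} \<Longrightarrow> 0 \<le> G r"
    and G_large: "\<And>r. r \<in> {0<..<R} \<Longrightarrow> M < (u r)\<^sup>2 \<Longrightarrow> \<eta> * r \<le> G r"
    and \<phi>_bound: "\<And>r. r \<in> {0<..<R} \<Longrightarrow> (\<phi> r)\<^sup>2 \<le> B"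
    and \<phi>_close: "\<And>r. r \<in> {0<..<R} \<Longrightarrow> (u r - \<phi> r)\<^sup>2 / r \<le> d r"
  shows "(LINT r:{0<..<R}|lborel. r * (u r)\<^sup>2) \<le>
    R\<^sup>2 * M + 2 * B / \<eta> * (LINT r:{0<..<R}|lborel. G r) + 2 * R\<^sup>2 * (LINT r:{0<..<R}|lborel. d r)"
proof -
  have pointwise: "r * (u r)\<^sup>2 \<le> R * M + 2 * B / \<eta> * G r + 2 * R\<^sup>2 * d r" if r: "r \<in> {0<..<R}" for r
  proof -
    have d_nonneg: "0 \<le> d r"
      using r \<phi>_close[OF r] by (smt (verit) divide_nonneg_pos greaterThanLessThan_iff zero_le_power2)
    have BG: "0 \<le> 2 * B / \<eta> * G r"
      using \<eta> B G_nonneg[OF r] by simp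
    have Rd: "0 \<le> 2 * R\<^sup>2 * d r"
      using d_nonneg by simp
    show ?thesis
    proof (cases "(u r)\<^sup>2 \<le> M")
      case True
      then have "r * (u r)\<^sup>2 \<le> R * M"
        using r by (intro mult_mono) auto
      then show ?thesis
        using BG Rd by linarith
    next
      case False
      have "r * (u r)\<^sup>2 \<le> r * (2 * (\<phi> r)\<^sup>2 + 2 * (u r - \<phi> r)\<^sup>2)"
        using r square_le_double_sum[of "u r" "\<phi> r"] by (intro mult_left_mono) auto
      also have "\<dots> = 2 * (r * (\<phi> r)\<^sup>2) + 2 * (r\<^sup>2 * ((u r - \<phi> r)\<^sup>2 / r))"
        using r by (simp add: power2_eq_square distrib_left mult.left_commute)
      also have "\<dots> \<le> 2 * B / \<eta> * G r + 2 * R\<^sup>2 * d r"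
      proof (rule add_mono)
        have "r * (\<phi> r)\<^sup>2 \<le> B / \<eta> * (\<eta> * r)"
          using r \<eta> \<phi>_bound[OF r] by (simp add: mult.commute mult_left_mono)
        also have "\<dots> \<le> B / \<eta> * G r"
          using \<eta> B G_large[OF r] False by (intro mult_left_mono) auto
        finally show "2 * (r * (\<phi> r)\<^sup>2) \<le> 2 * B / \<eta> * G r"
          by simp
        have "r\<^sup>2 * ((u r - \<phi> r)\<^sup>2 / r) \<le> R\<^sup>2 * d r"
          using r \<phi>_close[OF r] d_nonneg by (intro mult_mono power_mono) auto
        then show "2 * (r\<^sup>2 * ((u r - \<phi> r)\<^sup>2 / r)) \<le> 2 * R\<^sup>2 * d r"
          by simp
      qed
      finally show ?thesis
        using mult_nonneg_nonneg[OF less_imp_le[OF R] M] by linarith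
    qed
  qed
  have ints: "set_integrable lborel {0<..<R} (\<lambda>r. R * M + 2 * B / \<eta> * G r + 2 * R\<^sup>2 * d r)"
    using set_integrable_const_Ioo G d by (intro set_integral_add(1) set_integrable_mult_right) auto
  have "(LINT r:{0<..<R}|lborel. r * (u r)\<^sup>2)
      \<le> (LINT r:{0<..<R}|lborel. R * M + 2 * B / \<eta> * G r + 2 * R\<^sup>2 * d r)"
    using T ints pointwise by (rule set_integral_mono)
  also have "\<dots> = R\<^sup>2 * M + 2 * B / \<eta> * (LINT r:{0<..<R}|lborel. G r) + 2 * R\<^sup>2 * (LINT r:{0<..<R}|lborel. d r)"
    using set_integrable_const_Ioo G d R
    by (simp add: set_integral_add set_integrable_mult_right set_integral_const_Ioo power2_eq_square)
  finally show ?thesis .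
qed

lemma bound_by_absorption:
  fixes N T c K A :: real
  assumes c: "0 \<le> c" and K: "0 \<le> K" and T: "0 \<le> T" and NT: "N \<le> 2 * c * T"
    and "T \<le> A + 2 * (2 * N + 2) / (16 * c * K + 1) * K"
  shows "T \<le> 2 * (A + 4 * K)"
proof -
  have "2 * (2 * N + 2) * K \<le> (8 * c * T + 4) * K"
    using NT K by (intro mult_right_mono) (auto simp: mult_ac)
  also have "\<dots> \<le> (16 * c * K + 1) * (T / 2 + 4 * K)"
    using mult_nonneg_nonneg[OF mult_nonneg_nonneg[OF c K] K] T by (simp add: algebra_simps)
  finally have "2 * (2 * N + 2) / (16 * c * K + 1) * K \<le> T / 2 + 4 * K"
    using c K by (simp add: pos_divide_le_eq mult.commute add_nonneg_pos)
  with assms(5) have "T \<le> A + (T / 2 + 4 * K)"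
    by linarith
  then show ?thesis
    by (simp add: field_simps)
qed

lemma Mset_norm_le_of_I_kappa_le:
  assumes uv: "(u, v) \<in> Mset n \<alpha> R \<kappa>" and n: "1 \<le> \<bar>n\<bar>" and \<alpha>: "0 < \<alpha>" and R: "0 < R"
    and I: "I_kappa n \<alpha> R \<kappa> (u, v) \<le> C" and "0 \<le> C"
  defines "c \<equiv> \<bar>1/\<alpha> - \<kappa>\<bar>" and "K \<equiv> \<alpha>\<^sup>2 * C"
  shows "H_norm_sq R (u, v) \<le> 4 * c * (R\<^sup>2 * ((exp (16 * c * K + 2) - 1) / \<alpha>) + 2 * R\<^sup>2 + 4 * K)"
proof -
  define \<eta> where "\<eta> = 16 * c * K + 1"
  define M where "M = (exp (\<eta> + 1) - 1) / \<alpha>"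
  have c: "0 \<le> c" and K: "0 \<le> K" and \<eta>: "1 \<le> \<eta>"
    using \<open>0 \<le> C\<close> by (simp_all add: c_def K_def \<eta>_def)
  have M: "0 \<le> M"
    using \<alpha> \<eta> by (simp add: M_def)
  have inH: "inH R (u, v)"
    using uv by (simp add: Mset_def)
  define N where "N = H_norm_sq R (u, v)"
  define T where "T = (LINT r:{0<..<R}|lborel. r * (u r)\<^sup>2)"
  define G where "G = (\<lambda>r. r * (ln (1 + \<alpha> * (u r)\<^sup>2) - \<alpha> * (u r)\<^sup>2 / (1 + \<alpha> * (u r)\<^sup>2)))"
  have NT: "N \<le> 2 * c * T"
    unfolding N_def T_def c_def by (rule Mset_norm_le_weighted_L2[OF uv n \<alpha>])
  have T: "0 \<le> T" and N: "0 \<le> N"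
    unfolding T_def N_def H_norm_sq_def Hintegrand_def by (auto intro: set_integral_nonneg)
  have GK: "(LINT r:{0<..<R}|lborel. G r) \<le> K"
    unfolding G_def K_def Mset_log_gap_integral[OF uv \<alpha>] using I by (simp add: mult_left_mono)
  have G_nonneg: "0 \<le> G r" and G_large: "M < (u r)\<^sup>2 \<Longrightarrow> \<eta> * r \<le> G r"
    if "r \<in> {0<..<R}" for r
    using that log_gap_bounds[OF \<alpha>, where x = "u r" and r = r]
    unfolding G_def M_def by auto
  obtain \<phi> d where \<phi>_bound: "\<And>x. x \<in> {0<..<R} \<Longrightarrow> (\<phi> x)\<^sup>2 \<le> 2 * N + 2"
    and d: "set_integrable lborel {0<..<R} d" "(LINT r:{0<..<R}|lborel. d r) \<le> 1"
    and \<phi>_close: "\<And>r. r \<in> {0<..<R} \<Longrightarrow> (u r - \<phi> r)\<^sup>2 / r \<le> d r"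
    using inH_close_to_bounded[OF inH] unfolding N_def by metis
  note ints = inH_set_integrable[OF inH less_imp_le[OF \<alpha>]]
  have "T \<le> R\<^sup>2 * M + 2 * (2 * N + 2) / \<eta> * (LINT r:{0<..<R}|lborel. G r)
      + 2 * R\<^sup>2 * (LINT r:{0<..<R}|lborel. d r)"
    unfolding T_def using R M \<eta> N ints(3) ints(6) d(1) G_nonneg G_large \<phi>_bound \<phi>_close
    by (intro weighted_L2_threshold_bound) (auto simp: G_def)
  also have "\<dots> \<le> R\<^sup>2 * M + 2 * (2 * N + 2) / \<eta> * K + 2 * R\<^sup>2 * 1"
    using GK d(2) N \<eta> by (intro add_mono mult_left_mono order_refl) auto
  also have "\<dots> = (R\<^sup>2 * M + 2 * R\<^sup>2) + 2 * (2 * N + 2) / (16 * c * K + 1) * K"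
    by (simp add: \<eta>_def)
  finally have "T \<le> 2 * ((R\<^sup>2 * M + 2 * R\<^sup>2) + 4 * K)"
    by (rule bound_by_absorption[OF c K T NT])
  then have "2 * c * T \<le> 2 * c * (2 * ((R\<^sup>2 * M + 2 * R\<^sup>2) + 4 * K))"
    using c by (intro mult_left_mono) auto
  with NT show ?thesis
    unfolding N_def M_def \<eta>_def by (simp add: algebra_simps)
qed

theorem lemma4p5:
  fixes n :: int and \<alpha> R \<kappa> :: real
    and u :: "nat \<Rightarrow> (real \<Rightarrow> real) \<times> (real \<Rightarrow> real)"
  assumes "\<bar>n\<bar> \<ge> 1" and "\<alpha> > 0" and "R > 0"
    and "\<kappa> < 1/\<alpha> - (r0^2 + (real_of_int n)^2) / (2 * R^2)"
    and "\<forall>j. u j \<in> Mset n \<alpha> R \<kappa>"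
    and "\<exists>C. \<forall>j. \<bar>I_kappa n \<alpha> R \<kappa> (u j)\<bar> \<le> C"
  shows "\<exists>B. \<forall>j. sqrt (H_norm_sq R (u j)) \<le> B"
proof -
  obtain C where C: "\<And>j. \<bar>I_kappa n \<alpha> R \<kappa> (u j)\<bar> \<le> C"
    using assms(6) by blast
  then have "0 \<le> C"
    by (meson abs_ge_zero order_trans)
  define c where "c = \<bar>1/\<alpha> - \<kappa>\<bar>"
  define K where "K = \<alpha>\<^sup>2 * C"
  define B where "B = 4 * c * (R\<^sup>2 * ((exp (16 * c * K + 2) - 1) / \<alpha>) + 2 * R\<^sup>2 + 4 * K)"
  have "H_norm_sq R (u j) \<le> B" for j
    using Mset_norm_le_of_I_kappa_le[of "fst (u j)" "snd (u j)", OF _ assms(1-3) _ \<open>0 \<le> C\<close>]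
      assms(5) C[of j] abs_le_D1
    unfolding B_def K_def c_def by simp
  then have "sqrt (H_norm_sq R (u j)) \<le> sqrt B" for j
    by (rule real_sqrt_le_mono)
  then show ?thesis
    by blast
qed

end
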